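(* In the $K$-tier network model described in the context with $W=0$, let tier $k$ use target SINR $\beta_k>0$ and rate $\mathcal R_k=\log_2(1+\beta_k)$, and define the area network throughput $\mathcal W=\sum_{k=1}^K\lambda_k\mathcal A_k(1-\mathcal O_k^{int})\mathcal R_k$, where $\mathcal O_k^{int}$ is the interference-limited outage probability of tier $k$ with target $\beta_k$. Regarded as a function of the access threshold $\epsilon$ with all other parameters fixed, $\lim_{\epsilon\to\infty}\mathcal W=0$.
   Context: Network model: $\mathcal K=\{1,\dots,K\}$. In $\mathbb R^2$, tier-$k$ BSs form a homogeneous PPP of intensity $\lambda_k>0$ and users a homogeneous PPP of intensity $\lambda_u>0$, all independent. Tier-$k$ BSs have transmit power $P_k>0$, $M_k\in\mathbb N$ antennas, bias $B_k>0$, path-loss exponent $\alpha_k>2$. $\Omega_k=P_kM_kB_k$, $\delta_k=2/\alpha_k$, $\Omega_{j,k}=\Omega_j/\Omega_k$, $\delta_{j,k}=\delta_j/\delta_k$. Access threshold $\epsilon>0$, $R_k=(\Omega_k/\epsilon)^{1/\alpha_k}$. Association: with $D_k$ the distance from a typical user to its nearest tier-$k$ BS, $\hat\rho_k=\Omega_kD_k^{-\alpha_k}$ if $D_k\le R_k$, else $0$; the user is associated with tier $k$ iff $\hat\rho_k>\hat\rho_j$ for all $j\ne k$, with probability $\mathcal T_k=\pi\lambda_k\int_0^{R_k^2}\exp(-\pi\sum_j\lambda_j\Omega_{j,k}^{\delta_j}r^{\delta_{j,k}})dr$. Activation probability of tier $j$: $\mathcal A_j=1-\exp\big(-\pi\lambda_u\int_0^{R_j^2}\exp(-\pi\sum_l\lambda_l\Omega_{l,j}^{\delta_l}r^{\delta_{l,j}})dr\big)$;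 active tier-$j$ BSs are modeled as a homogeneous PPP of intensity $\mathcal A_j\lambda_j$. Outage model: conditional on association with tier $k$, the serving distance $X_k$ has density $\frac{2\pi\lambda_k}{\mathcal T_k}x\exp(-\pi\sum_j\lambda_j\Omega_{j,k}^{\delta_j}x^{2\delta_{j,k}})$ on $(0,R_k]$; given $X_k$, interferers of tier $j$ are the points of independent homogeneous PPPs of intensity $\mathcal A_j\lambda_j$ outside the disk around the user of radius $\Omega_{j,k}^{1/\alpha_j}X_k^{\alpha_k/\alpha_j}$; $\|\mathbf h\|^2\sim\mathrm{Gamma}(M_k,1)$, an interferer of tier $j$ at distance $r$ contributes $P_jVr^{-\alpha_j}$ with $V\sim\mathrm{Exp}(1)$, all independent; $I_o$ is the total interference and $\mathcal O_k^{int}=\mathbb P\{P_k\|\mathbf h\|^2X_k^{-\alpha_k}/I_o<\beta_k\}$. *)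

theory Defs
  imports "HOL-Probability.Probability"
begin

definition Omega :: "(nat \<Rightarrow> real) \<Rightarrow> (nat \<Rightarrow> nat) \<Rightarrow> (nat \<Rightarrow> real) \<Rightarrow> nat \<Rightarrow> real" where
  "Omega P Mn B k = P k * real (Mn k) * B k"

definition dlt :: "(nat \<Rightarrow> real) \<Rightarrow> nat \<Rightarrow> real" where
  "dlt al k = 2 / al k"

definition Rad :: "(nat \<Rightarrow> real) \<Rightarrow> (nat \<Rightarrow> real) \<Rightarrow> real \<Rightarrow> nat \<Rightarrow> real" where
  "Rad Om al eps k = (Om k / eps) powr (1 / al k)"

definition assoc_integrand :: "nat \<Rightarrow> (nat \<Rightarrow> real) \<Rightarrow> (nat \<Rightarrow> real) \<Rightarrow> (nat \<Rightarrow> real) \<Rightarrow> nat \<Rightarrow> real \<Rightarrow> real" where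
  "assoc_integrand K lam Om al k r =
     exp (- pi * (\<Sum>j\<in>{1..K}. lam j * (Om j / Om k) powr (dlt al j) * r powr (dlt al j / dlt al k)))"

definition assoc_prob :: "nat \<Rightarrow> (nat \<Rightarrow> real) \<Rightarrow> (nat \<Rightarrow> real) \<Rightarrow> (nat \<Rightarrow> real) \<Rightarrow> real \<Rightarrow> nat \<Rightarrow> real" where
  "assoc_prob K lam Om al eps k =
     pi * lam k * integral {0..(Rad Om al eps k)\<^sup>2} (assoc_integrand K lam Om al k)"

definition activ_prob :: "nat \<Rightarrow> (nat \<Rightarrow> real) \<Rightarrow> real \<Rightarrow> (nat \<Rightarrow> real) \<Rightarrow> (nat \<Rightarrow> real) \<Rightarrow> real \<Rightarrow> nat \<Rightarrow> real" where
  "activ_prob K lam lu Om al eps j =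
     1 - exp (- pi * lu * integral {0..(Rad Om al eps j)\<^sup>2} (assoc_integrand K lam Om al j))"

text \<open>density of the serving distance X_k conditional on association with tier k\<close>
definition serv_density :: "nat \<Rightarrow> (nat \<Rightarrow> real) \<Rightarrow> (nat \<Rightarrow> real) \<Rightarrow> (nat \<Rightarrow> real) \<Rightarrow> real \<Rightarrow> nat \<Rightarrow> real \<Rightarrow> real" where
  "serv_density K lam Om al eps k x =
     (if 0 < x \<and> x \<le> Rad Om al eps k then
        2 * pi * lam k / assoc_prob K lam Om al eps k * x *
        exp (- pi * (\<Sum>j\<in>{1..K}. lam j * (Om j / Om k) powr (dlt al j) * x powr (2 * (dlt al j / dlt al k))))
      else 0)"

definition excl_radius :: "(nat \<Rightarrow> real) \<Rightarrow> (nat \<Rightarrow> real) \<Rightarrow> nat \<Rightarrow> nat \<Rightarrow> real \<Rightarrow> real" where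
  "excl_radius Om al k j x = (Om j / Om k) powr (1 / al j) * x powr (al k / al j)"

text \<open>Conditional Laplace transform E[exp(-s I_o) | X_k = x] of the interference, i.e. the
  probability generating functional of independent PPPs of intensity A_j lambda_j outside the
  exclusion disks, with i.i.d. Exp(1) fading marks (E exp(-a V) = 1/(1+a)).\<close>
definition interf_laplace :: "nat \<Rightarrow> (nat \<Rightarrow> real) \<Rightarrow> real \<Rightarrow> (nat \<Rightarrow> real) \<Rightarrow> (nat \<Rightarrow> real) \<Rightarrow> (nat \<Rightarrow> real)
      \<Rightarrow> real \<Rightarrow> nat \<Rightarrow> real \<Rightarrow> real \<Rightarrow> real" where
  "interf_laplace K lam lu P Om al eps k s x =
     exp (- (\<Sum>j\<in>{1..K}. activ_prob K lam lu Om al eps j * lam j *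
        (LINT y:{y::real \<times> real. norm y > excl_radius Om al k j x}|lborel.
            1 - 1 / (1 + s * P j * norm y powr (- al j)))))"

text \<open>(M, X, G, I) is a realisation of the outage model of tier k at access threshold eps:
  X = serving distance, G = |h|^2 ~ Gamma(M_k,1), I = total interference I_o.
  The joint law of (X, I) is specified by the density of X together with the conditional
  Laplace transform of I given X; G is independent of (X, I).\<close>
definition outage_model :: "nat \<Rightarrow> (nat \<Rightarrow> real) \<Rightarrow> real \<Rightarrow> (nat \<Rightarrow> real) \<Rightarrow> (nat \<Rightarrow> nat) \<Rightarrow> (nat \<Rightarrow> real)
      \<Rightarrow> (nat \<Rightarrow> real) \<Rightarrow> real \<Rightarrow> nat \<Rightarrow> 'a measure \<Rightarrow> ('a \<Rightarrow> real) \<Rightarrow> ('a \<Rightarrow> real) \<Rightarrow> ('a \<Rightarrow> real) \<Rightarrow> bool" where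
  "outage_model K lam lu P Mn B al eps k M X G I \<longleftrightarrow>
     prob_space M \<and>
     X \<in> borel_measurable M \<and> G \<in> borel_measurable M \<and> I \<in> borel_measurable M \<and>
     (\<forall>\<omega>\<in>space M. 0 \<le> I \<omega>) \<and>
     distributed M lborel G (\<lambda>x. ennreal (erlang_density (Mn k - 1) 1 x)) \<and>
     (\<forall>A\<in>sets (borel :: real measure). \<forall>C\<in>sets (borel :: (real \<times> real) measure).
        measure M {\<omega>\<in>space M. G \<omega> \<in> A \<and> (X \<omega>, I \<omega>) \<in> C} =
        measure M {\<omega>\<in>space M. G \<omega> \<in> A} * measure M {\<omega>\<in>space M. (X \<omega>, I \<omega>) \<in> C}) \<and>
     (\<forall>s\<ge>0. \<forall>A\<in>sets borel.
        integral\<^sup>L M (\<lambda>\<omega>. exp (- s * I \<omega>) * indicator A (X \<omega>)) =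
        (LINT x:A|lborel. interf_laplace K lam lu P (Omega P Mn B) al eps k s x *
                          serv_density K lam (Omega P Mn B) al eps k x))"

text \<open>interference-limited outage probability P{P_k |h|^2 X^{-alpha_k} / I_o < beta_k}
  (written without division, so that I_o = 0 means SIR = infinity, no outage)\<close>
definition outage_prob :: "(nat \<Rightarrow> real) \<Rightarrow> (nat \<Rightarrow> real) \<Rightarrow> (nat \<Rightarrow> real) \<Rightarrow> nat \<Rightarrow> 'a measure
      \<Rightarrow> ('a \<Rightarrow> real) \<Rightarrow> ('a \<Rightarrow> real) \<Rightarrow> ('a \<Rightarrow> real) \<Rightarrow> real" where
  "outage_prob P al beta k M X G I =
     measure M {\<omega>\<in>space M. P k * G \<omega> * X \<omega> powr (- al k) < beta k * I \<omega>}"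

end

theory Submission
  imports Defs
begin

text \<open>As \<open>\<epsilon> \<rightarrow> \<infinity>\<close> the access radius \<open>R\<^sub>k = (\<Omega>\<^sub>k/\<epsilon>)\<^bsup>1/\<alpha>\<^sub>k\<^esup>\<close> shrinks to \<open>0\<close>.
  The integrand in the activation probability takes values in \<open>[0,1]\<close>, so its integral over
  \<open>[0, R\<^sub>k\<^sup>2]\<close> is squeezed to \<open>0\<close> and \<open>\<A>\<^sub>k \<rightarrow> 0\<close>. The factor \<open>1 - \<O>\<^sub>k\<close> is a probability of
  success and hence bounded, so every summand of the throughput vanishes.\<close>

lemma tendsto_zero_mult_Bfun:
  fixes f g :: "'a \<Rightarrow> 'b::real_normed_algebra"
  assumes "(f \<longlongrightarrow> 0) F" and "Bfun g F"
  shows "((\<lambda>x. f x * g x) \<longlongrightarrow> 0) F"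
  using bounded_bilinear.Zfun_prod_Bfun[OF bounded_bilinear_mult] assms
  by (simp add: tendsto_Zfun_iff)

lemma integral_atLeastAtMost_bounds:
  fixes f :: "real \<Rightarrow> real"
  assumes "a \<le> b" and "\<And>x. x \<in> {a..b} \<Longrightarrow> 0 \<le> f x" and "\<And>x. x \<in> {a..b} \<Longrightarrow> f x \<le> 1"
  shows "0 \<le> integral {a..b} f" and "integral {a..b} f \<le> b - a"
proof -
  have "0 \<le> integral {a..b} f \<and> integral {a..b} f \<le> b - a"
  proof (cases "f integrable_on {a..b}")
    case True
    have "integral {a..b} f \<le> integral {a..b} (\<lambda>_. 1)"
      using True assms(3) by (intro integral_le) auto
    with True assms show ?thesis by (auto intro: integral_nonneg)
  qed (simp add: assms(1) not_integrable_integral)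
  then show "0 \<le> integral {a..b} f" and "integral {a..b} f \<le> b - a" by auto
qed

lemma assoc_integrand_le_1:
  assumes "\<And>j. j \<in> {1..K} \<Longrightarrow> 0 \<le> lam j"
  shows "assoc_integrand K lam Om al k r \<le> 1"
proof -
  have "0 \<le> (\<Sum>j\<in>{1..K}. lam j * (Om j / Om k) powr (dlt al j) * r powr (dlt al j / dlt al k))"
    using assms by (intro sum_nonneg mult_nonneg_nonneg) auto
  then show ?thesis unfolding assoc_integrand_def by simp
qed

lemma Rad_tendsto_0:
  assumes "0 \<le> Om k" and "0 < al k"
  shows "((\<lambda>eps. Rad Om al eps k) \<longlongrightarrow> 0) at_top"
  unfolding Rad_def
proof (rule tendsto_zero_powrI)
  show "((\<lambda>eps. Om k / eps) \<longlongrightarrow> 0) at_top"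
    by (intro tendsto_divide_0[OF tendsto_const] filterlim_at_top_imp_at_infinity filterlim_ident)
  show "\<forall>\<^sub>F eps in at_top. 0 \<le> Om k / eps"
    using eventually_ge_at_top[of "0::real"] by eventually_elim (use assms(1) in simp)
  show "((\<lambda>eps. 1 / al k) \<longlongrightarrow> 1 / al k) at_top" by simp
qed (use assms(2) in simp)

lemma activ_prob_tendsto_0:
  assumes "\<And>j. j \<in> {1..K} \<Longrightarrow> 0 \<le> lam j" and "0 \<le> Om k" and "0 < al k"
  shows "((\<lambda>eps. activ_prob K lam lu Om al eps k) \<longlongrightarrow> 0) at_top"
proof -
  define J where "J eps = integral {0..(Rad Om al eps k)\<^sup>2} (assoc_integrand K lam Om al k)" for eps
  have "((\<lambda>eps. (Rad Om al eps k)\<^sup>2) \<longlongrightarrow> 0) at_top"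
    using tendsto_power[OF Rad_tendsto_0[of Om k al], of 2] assms(2,3) by simp
  moreover have "0 \<le> J eps" and "J eps \<le> (Rad Om al eps k)\<^sup>2 - 0" for eps
    unfolding J_def
    by (intro integral_atLeastAtMost_bounds assoc_integrand_le_1 assms(1);
        simp add: assoc_integrand_def)+
  ultimately have "(J \<longlongrightarrow> 0) at_top"
    by (intro tendsto_sandwich[of "\<lambda>_. 0" J _ "\<lambda>eps. (Rad Om al eps k)\<^sup>2"]) auto
  then have "((\<lambda>eps. 1 - exp (- pi * lu * J eps)) \<longlongrightarrow> 1 - exp (- pi * lu * 0)) at_top"
    by (intro tendsto_intros)
  then show ?thesis unfolding activ_prob_def J_def by simp
qed

lemma outage_prob_bounds:
  assumes "prob_space M"
  shows "0 \<le> outage_prob P al beta k M X G I" and "outage_prob P al beta k M X G I \<le> 1"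
  using prob_space.prob_le_1[OF assms] by (auto simp: outage_prob_def)

theorem mainTheorem8:
  fixes K :: nat and lam P B al beta :: "nat \<Rightarrow> real" and Mn :: "nat \<Rightarrow> nat" and lu :: real
    and Mp :: "real \<Rightarrow> nat \<Rightarrow> 'a measure"
    and X G I :: "real \<Rightarrow> nat \<Rightarrow> 'a \<Rightarrow> real"
  assumes "K \<ge> 1" and "lu > 0"
    and "\<forall>k\<in>{1..K}. lam k > 0 \<and> P k > 0 \<and> Mn k \<ge> 1 \<and> B k > 0 \<and> al k > 2 \<and> beta k > 0"
    and "\<forall>eps>0. \<forall>k\<in>{1..K}.
           outage_model K lam lu P Mn B al eps k (Mp eps k) (X eps k) (G eps k) (I eps k)"
  shows "((\<lambda>eps. \<Sum>k\<in>{1..K}. lam k * activ_prob K lam lu (Omega P Mn B) al eps k *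
            (1 - outage_prob P al beta k (Mp eps k) (X eps k) (G eps k) (I eps k)) *
            log 2 (1 + beta k)) \<longlongrightarrow> 0) at_top"
proof (rule tendsto_null_sum)
  fix k assume k: "k \<in> {1..K}"
  let ?A = "\<lambda>eps. activ_prob K lam lu (Omega P Mn B) al eps k"
  let ?S = "\<lambda>eps. 1 - outage_prob P al beta k (Mp eps k) (X eps k) (G eps k) (I eps k)"
  have "(?A \<longlongrightarrow> 0) at_top"
  proof (rule activ_prob_tendsto_0)
    show "0 \<le> Omega P Mn B k" "0 < al k"
      using assms(3) k unfolding Omega_def by (fastforce intro: mult_nonneg_nonneg)+
    show "0 \<le> lam j" if "j \<in> {1..K}" for j
      using assms(3) that by (auto intro: less_imp_le)
  qed
  moreover have "\<forall>\<^sub>F eps in at_top. norm (?S eps) \<le> 1"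
    using eventually_gt_at_top[of "0::real"]
  proof eventually_elim
    case (elim eps)
    then have "prob_space (Mp eps k)" using assms(4) k by (simp add: outage_model_def)
    then show ?case using outage_prob_bounds by fastforce
  qed
  ultimately have "((\<lambda>eps. ?A eps * ?S eps) \<longlongrightarrow> 0) at_top"
    by (intro tendsto_zero_mult_Bfun BfunI)
  from tendsto_mult_left_zero[OF tendsto_mult_right_zero[OF this, of "lam k"], of "log 2 (1 + beta k)"]
  show "((\<lambda>eps. lam k * ?A eps * ?S eps * log 2 (1 + beta k)) \<longlongrightarrow> 0) at_top"
    by (simp add: mult.assoc)
qed

end
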